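(* Let $B,D\in\mathrm{Mat}_{m\times m}(\mathbb{R})$ and let $f\in C^\infty(\mathbb{R}^m)$ with $f(u)\neq 0$ for all $u$. Set $\mathbf{B}(u)=f(u)B$ and $\mathbf{D}(u)=f(u)D$, and let $L_{(\mathbf{B},\mathbf{D}^t)}\subset T\mathbb{R}^m\oplus T^*\mathbb{R}^m$ be the subbundle with fibre $L_{(\mathbf{B},\mathbf{D}^t)}(u)=\{(\mathbf{B}(u)z,\mathbf{D}^t(u)z): z\in\mathbb{R}^m\}$ at each $u\in\mathbb{R}^m$. Then $L_{(\mathbf{B},\mathbf{D}^t)}$ is a big-isotropic structure if and only if $DB+B^tD^t=0$, and it is a Dirac structure if and only if $DB+B^tD^t=0$ and $\ker B\cap\ker D^t=\{0\}$.
   Context: For a manifold $M$, $\mathbb{T}M=TM\oplus T^*M$ carries the pairing $\langle\langle (X,\alpha),(Y,\beta)\rangle\rangle=\frac12(\beta(X)+\alpha(Y))$. For a linear subbundle $L$, $L^\perp=\{(X,\alpha): \langle\langle (X,\alpha),(Y,\beta)\rangle\rangle=0\ \forall (Y,\beta)\in L\}$; $L$ is isotropic if $L\subseteq L^\perp$ and maximal isotropic if $L=L^\perp$. The Courant bracket of sections is $[(X,\alpha),(Y,\beta)]=\big([X,Y],\ \mathcal{L}_X\beta-\mathcal{L}_Y\alpha+\frac12 d(\alpha(Y)-\beta(X))\big)$. A big-isotropic structure is an isotropic linear subbundle whose space of sections is closed under the Courant bracket; a Dirac structure is a maximal isotropic linear subbundle whose sections are closed under the Courant bracket. Vectors and covectors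 on $\mathbb{R}^m$ are identified with column vectors in $\mathbb{R}^m$ via the canonical basis. *)

theory Defs
  imports "HOL-Analysis.Analysis"
begin

definition pd :: "(real^'m \<Rightarrow> real) \<Rightarrow> 'm \<Rightarrow> real^'m \<Rightarrow> real" where
  "pd g i u = frechet_derivative g (at u) (axis i 1)"

fun Ck :: "nat \<Rightarrow> (real^'m \<Rightarrow> real) \<Rightarrow> bool" where
  "Ck 0 g = continuous_on UNIV g"
| "Ck (Suc k) g = ((\<forall>x. g differentiable (at x)) \<and> (\<forall>i. Ck k (\<lambda>x. pd g i x)))"

definition smooth_fun :: "(real^'m \<Rightarrow> real) \<Rightarrow> bool" where
  "smooth_fun g = (\<forall>k. Ck k g)"

definition smooth_vec :: "(real^'m \<Rightarrow> real^'n) \<Rightarrow> bool" where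
  "smooth_vec F = (\<forall>j. smooth_fun (\<lambda>x. F x $ j))"

definition smooth_sec :: "(real^'m \<Rightarrow> (real^'m) \<times> (real^'m)) \<Rightarrow> bool" where
  "smooth_sec s = (smooth_vec (\<lambda>x. fst (s x)) \<and> smooth_vec (\<lambda>x. snd (s x)))"

definition vpd :: "(real^'m \<Rightarrow> real^'n) \<Rightarrow> 'm \<Rightarrow> real^'m \<Rightarrow> real^'n" where
  "vpd F i u = (\<chi> j. pd (\<lambda>x. F x $ j) i u)"

definition lie_bracket :: "(real^'m \<Rightarrow> real^'m) \<Rightarrow> (real^'m \<Rightarrow> real^'m) \<Rightarrow> real^'m \<Rightarrow> real^'m" where
  "lie_bracket X Y u = (\<Sum>i\<in>UNIV. (X u $ i) *\<^sub>R vpd Y i u) - (\<Sum>i\<in>UNIV. (Y u $ i) *\<^sub>R vpd X i u)"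

definition lie_deriv :: "(real^'m \<Rightarrow> real^'m) \<Rightarrow> (real^'m \<Rightarrow> real^'m) \<Rightarrow> real^'m \<Rightarrow> real^'m" where
  "lie_deriv X \<beta> u = (\<Sum>i\<in>UNIV. (X u $ i) *\<^sub>R vpd \<beta> i u)
      + (\<chi> j. \<Sum>i\<in>UNIV. \<beta> u $ i * pd (\<lambda>x. X x $ i) j u)"

definition ext_d :: "(real^'m \<Rightarrow> real) \<Rightarrow> real^'m \<Rightarrow> real^'m" where
  "ext_d g u = (\<chi> j. pd g j u)"

definition courant :: "(real^'m \<Rightarrow> (real^'m) \<times> (real^'m)) \<Rightarrow> (real^'m \<Rightarrow> (real^'m) \<times> (real^'m))
    \<Rightarrow> real^'m \<Rightarrow> (real^'m) \<times> (real^'m)" where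
  "courant s t u =
    (let X = (\<lambda>x. fst (s x)); \<alpha> = (\<lambda>x. snd (s x)); Y = (\<lambda>x. fst (t x)); \<beta> = (\<lambda>x. snd (t x)) in
     (lie_bracket X Y u,
      lie_deriv X \<beta> u - lie_deriv Y \<alpha> u
        + (1/2) *\<^sub>R ext_d (\<lambda>x. \<alpha> x \<bullet> Y x - \<beta> x \<bullet> X x) u))"

text \<open>The symmetric pairing; covectors identified with column vectors, so beta(X) = beta . X.\<close>
definition pairing :: "(real^'m) \<times> (real^'m) \<Rightarrow> (real^'m) \<times> (real^'m) \<Rightarrow> real" where
  "pairing w v = (1/2) * (snd v \<bullet> fst w + snd w \<bullet> fst v)"

definition perp :: "(real^'m \<Rightarrow> ((real^'m) \<times> (real^'m)) set) \<Rightarrow> real^'m \<Rightarrow> ((real^'m) \<times> (real^'m)) set" where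
  "perp L u = {w. \<forall>v\<in>L u. pairing w v = 0}"

definition is_section :: "(real^'m \<Rightarrow> ((real^'m) \<times> (real^'m)) set) \<Rightarrow> (real^'m \<Rightarrow> (real^'m) \<times> (real^'m)) \<Rightarrow> bool" where
  "is_section L s = (smooth_sec s \<and> (\<forall>u. s u \<in> L u))"

definition linear_subbundle :: "(real^'m \<Rightarrow> ((real^'m) \<times> (real^'m)) set) \<Rightarrow> bool" where
  "linear_subbundle L = ((\<forall>u. subspace (L u)) \<and> (\<exists>k. \<forall>u. dim (L u) = k)
      \<and> (\<forall>u. \<forall>w\<in>L u. \<exists>s. is_section L s \<and> s u = w))"

definition isotropic :: "(real^'m \<Rightarrow> ((real^'m) \<times> (real^'m)) set) \<Rightarrow> bool" where
  "isotropic L = (\<forall>u. L u \<subseteq> perp L u)"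

definition maximal_isotropic :: "(real^'m \<Rightarrow> ((real^'m) \<times> (real^'m)) set) \<Rightarrow> bool" where
  "maximal_isotropic L = (\<forall>u. L u = perp L u)"

definition courant_closed :: "(real^'m \<Rightarrow> ((real^'m) \<times> (real^'m)) set) \<Rightarrow> bool" where
  "courant_closed L = (\<forall>s t. is_section L s \<longrightarrow> is_section L t \<longrightarrow> is_section L (courant s t))"

definition big_isotropic :: "(real^'m \<Rightarrow> ((real^'m) \<times> (real^'m)) set) \<Rightarrow> bool" where
  "big_isotropic L = (linear_subbundle L \<and> isotropic L \<and> courant_closed L)"

definition dirac :: "(real^'m \<Rightarrow> ((real^'m) \<times> (real^'m)) set) \<Rightarrow> bool" where
  "dirac L = (linear_subbundle L \<and> maximal_isotropic L \<and> courant_closed L)"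

end

theory Submission
  imports Defs
begin

text \<open>Since f never vanishes, every fibre of L is the same subspace V = {(B z, D^T z)}. On V the pairing is
  \<langle>(B z, D^T z), (B w, D^T w)\<rangle> = w \<bullet> (D B + B^T D^T) z / 2, so V is isotropic iff D B + B^T D^T = 0.
  A constant isotropic subbundle is automatically Courant closed: the partial derivatives of a
  section of V stay in V, and the Courant bracket of s = (X, \<alpha>) and t = (Y, \<beta>) differs from
  \<Sum>_i X_i \<partial>_i t - \<Sum>_i Y_i \<partial>_i s only by the covector with entries
  \<langle>\<partial>_j s, t\<rangle> - \<langle>\<partial>_j t, s\<rangle>, which vanish by isotropy.
  Finally, the annihilator of V under the pairing is the swapped Euclidean orthogonal complement,
  of dimension 2m - dim V, so an isotropic V is maximal iff dim V = m, i.e. iff z \<mapsto> (B z, D^T z)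
  is injective.\<close>

section \<open>Partial derivatives\<close>

lemma pd_has_derivative:
  assumes "(g has_derivative g') (at u)"
  shows "pd g i u = g' (axis i 1)"
  using frechet_derivative_at[OF assms] by (simp add: pd_def)

lemma pd_const [simp]: "pd (\<lambda>x. c) i = (\<lambda>x. 0)"
  by (simp add: pd_def fun_eq_iff)

lemma vpd_const [simp]: "vpd (\<lambda>x. c) i u = 0"
  by (simp add: vpd_def vec_eq_iff)

lemma pd_add:
  assumes "f differentiable (at u)" "g differentiable (at u)"
  shows "pd (\<lambda>x. f x + g x) i u = pd f i u + pd g i u"
  using pd_has_derivative[OF has_derivative_add[OF assms[unfolded frechet_derivative_works]]]
  by (simp add: pd_def)

lemma pd_diff:
  assumes "f differentiable (at u)" "g differentiable (at u)"
  shows "pd (\<lambda>x. f x - g x) i u = pd f i u - pd g i u"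
  using pd_has_derivative[OF has_derivative_diff[OF assms[unfolded frechet_derivative_works]]]
  by (simp add: pd_def)

lemma pd_mult:
  assumes "f differentiable (at u)" "g differentiable (at u)"
  shows "pd (\<lambda>x. f x * g x) i u = f u * pd g i u + pd f i u * g u"
  using pd_has_derivative[OF has_derivative_mult[OF assms[unfolded frechet_derivative_works]]]
  by (simp add: pd_def)

lemma pd_sum:
  assumes "\<And>k. k \<in> A \<Longrightarrow> F k differentiable (at u)"
  shows "pd (\<lambda>x. \<Sum>k\<in>A. F k x) i u = (\<Sum>k\<in>A. pd (F k) i u)"
  using assms
  by (subst pd_has_derivative[OF has_derivative_sum[where f'="\<lambda>k. frechet_derivative (F k) (at u)"]])
     (simp_all add: pd_def frechet_derivative_works[symmetric])

lemma pd_inner: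
  fixes F G :: "real^'m \<Rightarrow> real^'n"
  assumes "\<And>k. (\<lambda>x. F x $ k) differentiable (at u)" "\<And>k. (\<lambda>x. G x $ k) differentiable (at u)"
  shows "pd (\<lambda>x. F x \<bullet> G x) j u = vpd F j u \<bullet> G u + F u \<bullet> vpd G j u"
proof -
  have "pd (\<lambda>x. F x \<bullet> G x) j u = pd (\<lambda>x. \<Sum>k\<in>UNIV. F x $ k * G x $ k) j u"
    by (simp add: inner_vec_def)
  also have "\<dots> = (\<Sum>k\<in>UNIV. F u $ k * pd (\<lambda>x. G x $ k) j u + pd (\<lambda>x. F x $ k) j u * G u $ k)"
    using assms by (simp add: pd_sum pd_mult)
  finally show ?thesis
    by (simp add: inner_vec_def vpd_def sum.distrib mult.commute add.commute)
qed

section \<open>Smooth functions\<close>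

lemma Ck_const: "Ck k (\<lambda>x. c)"
  by (induction k arbitrary: c) simp_all

lemma Ck_Suc_imp_Ck: "Ck (Suc k) g \<Longrightarrow> Ck k g"
proof (induction k arbitrary: g)
  case 0
  then show ?case
    by (simp add: differentiable_at_imp_differentiable_on differentiable_imp_continuous_on)
next
  case (Suc k)
  then show ?case by (metis Ck.simps(2))
qed

lemma Ck_add: "Ck k f \<Longrightarrow> Ck k g \<Longrightarrow> Ck k (\<lambda>x. f x + g x)"
proof (induction k arbitrary: f g)
  case 0
  then show ?case by (simp add: continuous_on_add)
next
  case (Suc k)
  then have "pd (\<lambda>x. f x + g x) i = (\<lambda>x. pd f i x + pd g i x)" for i
    by (simp add: pd_add fun_eq_iff)
  with Suc show ?case by simp
qed

lemma Ck_mult: "Ck k f \<Longrightarrow> Ck k g \<Longrightarrow> Ck k (\<lambda>x. f x * g x)"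
proof (induction k arbitrary: f g)
  case 0
  then show ?case by (simp add: continuous_on_mult)
next
  case (Suc k)
  have "Ck k f" "Ck k g"
    using Suc.prems by (simp_all add: Ck_Suc_imp_Ck)
  moreover have "pd (\<lambda>x. f x * g x) i = (\<lambda>x. f x * pd g i x + pd f i x * g x)" for i
    using Suc.prems by (simp add: pd_mult fun_eq_iff)
  ultimately show ?case
    using Suc by (simp add: Ck_add)
qed

lemma smooth_fun_const: "smooth_fun (\<lambda>x. c)"
  by (simp add: smooth_fun_def Ck_const)

lemma smooth_fun_add: "smooth_fun f \<Longrightarrow> smooth_fun g \<Longrightarrow> smooth_fun (\<lambda>x. f x + g x)"
  by (simp add: smooth_fun_def Ck_add)

lemma smooth_fun_mult: "smooth_fun f \<Longrightarrow> smooth_fun g \<Longrightarrow> smooth_fun (\<lambda>x. f x * g x)"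
  by (simp add: smooth_fun_def Ck_mult)

lemma smooth_fun_diff: "smooth_fun f \<Longrightarrow> smooth_fun g \<Longrightarrow> smooth_fun (\<lambda>x. f x - g x)"
  using smooth_fun_add[OF _ smooth_fun_mult[OF smooth_fun_const, of g "-1"], of f] by simp

lemma smooth_fun_sum: "(\<And>k. smooth_fun (F k)) \<Longrightarrow> smooth_fun (\<lambda>x. \<Sum>k\<in>A. F k x)"
  by (induction A rule: infinite_finite_induct) (simp_all add: smooth_fun_const smooth_fun_add)

lemma smooth_fun_pd: "smooth_fun g \<Longrightarrow> smooth_fun (\<lambda>x. pd g i x)"
  by (metis smooth_fun_def Ck.simps(2))

lemma smooth_fun_differentiable: "smooth_fun g \<Longrightarrow> g differentiable (at x)"
  by (metis smooth_fun_def Ck.simps(2))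

lemma smooth_fun_inner:
  "smooth_vec F \<Longrightarrow> smooth_vec G \<Longrightarrow> smooth_fun (\<lambda>x. F x \<bullet> G x)"
  unfolding smooth_vec_def inner_vec_def inner_real_def
  by (intro smooth_fun_sum smooth_fun_mult) auto

lemma smooth_vec_add: "smooth_vec F \<Longrightarrow> smooth_vec G \<Longrightarrow> smooth_vec (\<lambda>x. F x + G x)"
  by (simp add: smooth_vec_def smooth_fun_add)

lemma smooth_vec_diff: "smooth_vec F \<Longrightarrow> smooth_vec G \<Longrightarrow> smooth_vec (\<lambda>x. F x - G x)"
  by (simp add: smooth_vec_def smooth_fun_diff)

lemma smooth_vec_scaleR:
  "smooth_fun g \<Longrightarrow> smooth_vec F \<Longrightarrow> smooth_vec (\<lambda>x. g x *\<^sub>R F x)"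
  by (simp add: smooth_vec_def smooth_fun_mult)

lemma smooth_vec_ext_d: "smooth_fun g \<Longrightarrow> smooth_vec (ext_d g)"
  by (simp add: smooth_vec_def ext_d_def smooth_fun_pd)

lemma smooth_vec_lie_bracket:
  "smooth_vec X \<Longrightarrow> smooth_vec Y \<Longrightarrow> smooth_vec (lie_bracket X Y)"
  unfolding lie_bracket_def smooth_vec_def
  by (auto intro!: smooth_fun_diff smooth_fun_sum smooth_fun_mult smooth_fun_pd simp: vpd_def)

lemma smooth_vec_lie_deriv:
  "smooth_vec X \<Longrightarrow> smooth_vec \<beta> \<Longrightarrow> smooth_vec (lie_deriv X \<beta>)"
  unfolding lie_deriv_def smooth_vec_def
  by (auto intro!: smooth_fun_add smooth_fun_sum smooth_fun_mult smooth_fun_pd simp: vpd_def)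

lemma smooth_sec_courant: "smooth_sec s \<Longrightarrow> smooth_sec t \<Longrightarrow> smooth_sec (courant s t)"
  unfolding smooth_sec_def courant_def Let_def
  by (auto intro!: smooth_vec_lie_bracket smooth_vec_add smooth_vec_diff smooth_vec_lie_deriv
      smooth_vec_scaleR[OF smooth_fun_const] smooth_vec_ext_d smooth_fun_diff smooth_fun_inner)

section \<open>Derivatives of sections and the Courant bracket\<close>

lemma differentiable_inner_vec:
  fixes F G :: "real^'m \<Rightarrow> real^'n"
  assumes "\<And>k. (\<lambda>x. F x $ k) differentiable (at u)" "\<And>k. (\<lambda>x. G x $ k) differentiable (at u)"
  shows "(\<lambda>x. F x \<bullet> G x) differentiable (at u)"
  unfolding inner_vec_def inner_real_def using assms by (intro differentiable_sum) auto

lemma smooth_sec_differentiable: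
  assumes "smooth_sec s"
  shows "(\<lambda>x. fst (s x) $ k) differentiable (at u)" "(\<lambda>x. snd (s x) $ k) differentiable (at u)"
  using assms by (simp_all add: smooth_sec_def smooth_vec_def smooth_fun_differentiable)

definition sec_pd :: "(real^'m \<Rightarrow> (real^'m) \<times> (real^'m)) \<Rightarrow> 'm \<Rightarrow> real^'m \<Rightarrow> (real^'m) \<times> (real^'m)"
  where "sec_pd s i u = (vpd (\<lambda>x. fst (s x)) i u, vpd (\<lambda>x. snd (s x)) i u)"

lemma pd_inner_sec:
  assumes "smooth_sec s"
  shows "pd (\<lambda>x. c \<bullet> s x) i u = c \<bullet> sec_pd s i u"
proof -
  have "pd (\<lambda>x. c \<bullet> s x) i u = pd (\<lambda>x. fst c \<bullet> fst (s x) + snd c \<bullet> snd (s x)) i u"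
    by (simp add: inner_prod_def)
  also have "\<dots> = c \<bullet> sec_pd s i u"
    using smooth_sec_differentiable[OF assms]
    by (simp add: pd_add pd_inner differentiable_inner_vec sec_pd_def inner_prod_def)
  finally show ?thesis .
qed

lemma sec_pd_in_subspace:
  assumes "subspace V" "smooth_sec s" "\<And>x. s x \<in> V"
  shows "sec_pd s i u \<in> V"
proof -
  have "c \<bullet> sec_pd s i u = 0" if "c \<in> orthogonal_comp V" for c
  proof -
    have "(\<lambda>x. c \<bullet> s x) = (\<lambda>x. 0)"
      using that assms(3) by (auto simp: orthogonal_comp_def orthogonal_def inner_commute fun_eq_iff)
    then show ?thesis
      using pd_inner_sec[OF assms(2), of c i u] by simp
  qed
  then have "sec_pd s i u \<in> orthogonal_comp (orthogonal_comp V)"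
    by (auto simp: orthogonal_comp_def orthogonal_def inner_commute)
  then show ?thesis
    using orthogonal_comp_self[OF assms(1)] by simp
qed

lemma lie_deriv_eq_inner:
  "lie_deriv X \<beta> u = (\<Sum>i\<in>UNIV. X u $ i *\<^sub>R vpd \<beta> i u) + (\<chi> j. \<beta> u \<bullet> vpd X j u)"
  by (simp add: lie_deriv_def inner_vec_def vpd_def)

lemma courant_eq_sec_pd:
  assumes s: "smooth_sec s" and t: "smooth_sec t"
  shows "courant s t u =
      (\<Sum>i\<in>UNIV. fst (s u) $ i *\<^sub>R sec_pd t i u) - (\<Sum>i\<in>UNIV. fst (t u) $ i *\<^sub>R sec_pd s i u)
      + (0, \<chi> j. pairing (sec_pd s j u) (t u) - pairing (sec_pd t j u) (s u))"
    (is "_ = ?rhs")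
proof (rule prod_eqI)
  show "fst (courant s t u) = fst ?rhs"
    by (simp add: courant_def Let_def lie_bracket_def sec_pd_def fst_sum)
next
  define X where "X = (\<lambda>x. fst (s x))"
  define \<alpha> where "\<alpha> = (\<lambda>x. snd (s x))"
  define Y where "Y = (\<lambda>x. fst (t x))"
  define \<beta> where "\<beta> = (\<lambda>x. snd (t x))"
  have secs: "s u = (X u, \<alpha> u)" "t u = (Y u, \<beta> u)"
    "sec_pd s j u = (vpd X j u, vpd \<alpha> j u)" "sec_pd t j u = (vpd Y j u, vpd \<beta> j u)" for j
    by (simp_all add: X_def \<alpha>_def Y_def \<beta>_def sec_pd_def)
  have snd_courant: "snd (courant s t u) =
      lie_deriv X \<beta> u - lie_deriv Y \<alpha> u + (1/2) *\<^sub>R ext_d (\<lambda>x. \<alpha> x \<bullet> Y x - \<beta> x \<bullet> X x) u"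
    by (simp add: courant_def Let_def X_def \<alpha>_def Y_def \<beta>_def)
  have ext_d: "ext_d (\<lambda>x. \<alpha> x \<bullet> Y x - \<beta> x \<bullet> X x) u = (\<chi> j.
      vpd \<alpha> j u \<bullet> Y u + \<alpha> u \<bullet> vpd Y j u - (vpd \<beta> j u \<bullet> X u + \<beta> u \<bullet> vpd X j u))"
    using smooth_sec_differentiable[OF s] smooth_sec_differentiable[OF t]
    by (simp add: X_def \<alpha>_def Y_def \<beta>_def ext_d_def pd_diff pd_inner differentiable_inner_vec)
  show "snd (courant s t u) = snd ?rhs"
    unfolding snd_courant ext_d lie_deriv_eq_inner
    by (simp add: secs pairing_def snd_sum vec_eq_iff algebra_simps inner_commute)
qed

section \<open>Constant subbundles\<close>

lemma courant_closed_const: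
  assumes V: "subspace V" and iso: "\<And>v w. v \<in> V \<Longrightarrow> w \<in> V \<Longrightarrow> pairing v w = 0"
  shows "courant_closed (\<lambda>_. V)"
  unfolding courant_closed_def is_section_def
proof (intro allI impI conjI)
  fix s t assume s: "smooth_sec s \<and> (\<forall>u. s u \<in> V)" and t: "smooth_sec t \<and> (\<forall>u. t u \<in> V)"
  then show "smooth_sec (courant s t)"
    by (simp add: smooth_sec_courant)
  fix u
  have ds: "sec_pd s i u \<in> V" and dt: "sec_pd t i u \<in> V" for i
    using s t by (simp_all add: sec_pd_in_subspace[OF V])
  then have "(\<chi> j. pairing (sec_pd s j u) (t u) - pairing (sec_pd t j u) (s u)) = 0"
    using s t iso by (simp add: vec_eq_iff)
  moreover have "(\<Sum>i\<in>UNIV. fst (s u) $ i *\<^sub>R sec_pd t i u) - (\<Sum>i\<in>UNIV. fst (t u) $ i *\<^sub>R sec_pd s i u) \<in> V"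
    using ds dt V
    by (intro subspace_diff subspace_sum subspace_scale) auto
  ultimately show "courant s t u \<in> V"
    using s t by (simp add: courant_eq_sec_pd zero_prod_def[symmetric])
qed

lemma linear_subbundle_const: "subspace V \<Longrightarrow> linear_subbundle (\<lambda>_. V)"
  unfolding linear_subbundle_def is_section_def smooth_sec_def smooth_vec_def
  by (auto intro!: exI[of _ "\<lambda>_. _"] simp: smooth_fun_const)

lemma perp_const: "perp (\<lambda>_. V) u = prod.swap ` orthogonal_comp V"
proof -
  have "pairing w v = 0 \<longleftrightarrow> orthogonal v (prod.swap w)" for w v :: "(real^'m) \<times> (real^'m)"
    by (cases w; cases v) (simp add: pairing_def orthogonal_def inner_commute add.commute)
  then show ?thesis
    by (force simp: perp_def orthogonal_comp_def image_iff)
qed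

lemma linear_swap: "linear prod.swap"
  by (auto simp: linear_iff)

lemma subspace_perp_const: "subspace (perp (\<lambda>_. V) u)"
  unfolding perp_const by (rule linear_subspace_image[OF linear_swap subspace_orthogonal_comp])

lemma dim_perp_const:
  assumes "subspace (V :: ((real^'m) \<times> (real^'m)) set)"
  shows "dim (perp (\<lambda>_. V) u) + dim V = 2 * CARD('m)"
proof -
  have "dim (orthogonal_comp V) + dim V = DIM((real^'m) \<times> (real^'m))"
    using dim_subspace_orthogonal_to_vectors[OF assms subspace_UNIV]
    by (simp add: orthogonal_comp_def)
  then show ?thesis
    unfolding perp_const by (simp add: dim_image_eq[OF linear_swap])
qed

lemma big_isotropic_const_iff:
  assumes "subspace V"
  shows "big_isotropic (\<lambda>_. V) \<longleftrightarrow> (\<forall>v\<in>V. \<forall>w\<in>V. pairing v w = 0)"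
  using courant_closed_const[OF assms] linear_subbundle_const[OF assms]
  by (auto simp: big_isotropic_def isotropic_def perp_def)

lemma dirac_const_iff:
  fixes V :: "((real^'m) \<times> (real^'m)) set"
  assumes V: "subspace V"
  shows "dirac (\<lambda>_. V) \<longleftrightarrow> (\<forall>v\<in>V. \<forall>w\<in>V. pairing v w = 0) \<and> dim V = CARD('m)"
proof -
  have "V = perp (\<lambda>_. V) u \<longleftrightarrow> (\<forall>v\<in>V. \<forall>w\<in>V. pairing v w = 0) \<and> dim V = CARD('m)" for u
  proof
    assume "V = perp (\<lambda>_. V) u"
    then show "(\<forall>v\<in>V. \<forall>w\<in>V. pairing v w = 0) \<and> dim V = CARD('m)"
      using dim_perp_const[OF V, of u] by (auto simp: perp_def)
  next
    assume iso: "(\<forall>v\<in>V. \<forall>w\<in>V. pairing v w = 0) \<and> dim V = CARD('m)"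
    then have "V \<subseteq> perp (\<lambda>_. V) u" "dim (perp (\<lambda>_. V) u) \<le> dim V"
      using dim_perp_const[OF V, of u] by (auto simp: perp_def)
    then show "V = perp (\<lambda>_. V) u"
      using subspace_dim_equal[OF V subspace_perp_const] by blast
  qed
  then show ?thesis
    using courant_closed_const[OF V] linear_subbundle_const[OF V]
    by (auto simp: dirac_def maximal_isotropic_def)
qed

section \<open>The graph of (B, D^T)\<close>

lemma linear_inj_iff_dim_range:
  fixes f :: "'a::euclidean_space \<Rightarrow> 'b::euclidean_space"
  assumes f: "linear f"
  shows "inj f \<longleftrightarrow> dim (range f) = DIM('a)"
proof
  assume "inj f"
  then show "dim (range f) = DIM('a)"
    using dim_image_eq[OF f, of UNIV] by (simp add: inj_on_def)
next
  assume dim: "dim (range f) = DIM('a)"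
  have range: "range f = span (f ` Basis)"
    using linear_span_image[OF f, of Basis] by simp
  have "DIM('a) \<le> card (f ` Basis)"
    using dim dim_le_card'[of "f ` Basis"] by (simp add: range)
  then have card: "card (f ` Basis) = card (Basis :: 'a set)"
    using card_image_le[of Basis f] by simp
  then have "independent (f ` Basis)"
    using card_eq_dim[of "f ` Basis" "f ` Basis"] dim range by (simp add: span_superset)
  moreover have "inj_on f Basis"
    using card by (simp add: inj_on_iff_eq_card)
  ultimately show "inj f"
    using linear_inj_on_span_iff_independent_image[OF f, of Basis] by simp
qed

lemma pairing_graph:
  fixes B D :: "real^'m^'m"
  shows "pairing (B *v z, transpose D *v z) (B *v w, transpose D *v w)
    = 1/2 * (w \<bullet> ((D ** B + transpose B ** transpose D) *v z))"
proof -
  have DB: "(transpose D *v w) \<bullet> (B *v z) = w \<bullet> ((D ** B) *v z)"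
    by (simp add: dot_lmul_matrix matrix_vector_mul_assoc)
  have "w \<bullet> ((transpose B ** transpose D) *v z) = (transpose B *v (transpose D *v z)) \<bullet> w"
    by (simp only: matrix_vector_mul_assoc inner_commute)
  then have BD: "(transpose D *v z) \<bullet> (B *v w) = w \<bullet> ((transpose B ** transpose D) *v z)"
    by (simp add: dot_lmul_matrix)
  show ?thesis
    unfolding pairing_def fst_conv snd_conv DB BD
    by (simp add: matrix_vector_mult_add_rdistrib inner_add_right)
qed

lemma isotropic_graph_iff:
  fixes B D :: "real^'m^'m"
  defines "V \<equiv> range (\<lambda>z. (B *v z, transpose D *v z))"
  shows "(\<forall>v\<in>V. \<forall>w\<in>V. pairing v w = 0) \<longleftrightarrow> D ** B + transpose B ** transpose D = 0"
proof
  let ?M = "D ** B + transpose B ** transpose D"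
  assume iso: "\<forall>v\<in>V. \<forall>w\<in>V. pairing v w = 0"
  have "?M *v z = 0" for z
  proof -
    have "pairing (B *v z, transpose D *v z) (B *v (?M *v z), transpose D *v (?M *v z)) = 0"
      using iso by (simp add: V_def)
    then have "1/2 * ((?M *v z) \<bullet> (?M *v z)) = 0"
      by (simp only: pairing_graph)
    then show ?thesis
      by simp
  qed
  then show "?M = 0"
    by (simp add: matrix_eq)
qed (auto simp: V_def pairing_graph simp del: transpose_matrix_vector)

lemma linear_graph:
  fixes B D :: "real^'m^'m"
  shows "linear (\<lambda>z. (B *v z, transpose D *v z))"
  using matrix_vector_mul_linear[of B] matrix_vector_mul_linear[of "transpose D"]
  by (simp add: linear_iff)

lemma inj_graph_iff:
  fixes B D :: "real^'m^'m"
  shows "inj (\<lambda>z. (B *v z, transpose D *v z)) \<longleftrightarrow> {z. B *v z = 0} \<inter> {z. transpose D *v z = 0} = {0}"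
proof -
  have "inj (\<lambda>z. (B *v z, transpose D *v z)) \<longleftrightarrow> (\<forall>z. B *v z = 0 \<and> transpose D *v z = 0 \<longrightarrow> z = 0)"
    by (simp only: linear_injective_0[OF linear_graph] zero_prod_def prod.inject)
  also have "\<dots> \<longleftrightarrow> {z. B *v z = 0} \<inter> {z. transpose D *v z = 0} = {0}"
    by (auto simp del: transpose_matrix_vector)
  finally show ?thesis .
qed

theorem lemma4p4:
  fixes B D :: "real^'m^'m" and f :: "real^'m \<Rightarrow> real"
    and L :: "real^'m \<Rightarrow> ((real^'m) \<times> (real^'m)) set"
  assumes "smooth_fun f"
    and "\<forall>u. f u \<noteq> 0"
    and "\<forall>u. L u = {(f u *\<^sub>R (B *v z), f u *\<^sub>R (transpose D *v z)) | z. True}"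
  shows "(big_isotropic L \<longleftrightarrow> D ** B + transpose B ** transpose D = 0)
       \<and> (dirac L \<longleftrightarrow> (D ** B + transpose B ** transpose D = 0
                         \<and> {z. B *v z = 0} \<inter> {z. transpose D *v z = 0} = {0}))"
proof -
  define N where "N = (\<lambda>z::real^'m. (B *v z, transpose D *v z))"
  have "L u = range N" for u
  proof -
    have "L u = N ` range (\<lambda>z. f u *\<^sub>R z)"
      using assms(3)
      by (simp add: N_def matrix_vector_mult_scaleR full_SetCompr_eq image_image
          del: transpose_matrix_vector)
    moreover have "surj (\<lambda>z::real^'m. f u *\<^sub>R z)"
      using assms(2) by (intro surjI[of _ "\<lambda>y. inverse (f u) *\<^sub>R y"]) simp
    ultimately show ?thesis
      by simp
  qed
  then have L: "L = (\<lambda>_. range N)"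
    by blast
  have V: "subspace (range N)"
    unfolding N_def using linear_graph subspace_UNIV by (rule linear_subspace_image)
  have "dim (range N) = CARD('m) \<longleftrightarrow> inj N"
    unfolding N_def using linear_inj_iff_dim_range[OF linear_graph[of B D]] by simp
  then show ?thesis
    unfolding L big_isotropic_const_iff[OF V] dirac_const_iff[OF V]
    using isotropic_graph_iff[of B D] inj_graph_iff[of B D] by (simp add: N_def)
qed

end
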